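(* Let $G=(V,E)$ be a simple cubic bipartite graph that has no potential 4-cycles, let $F_1$ be a 2-factor of $G$ all of whose cycles are chordless, and let $F_2$ be a 2-factor that is locally optimal with respect to $F_1$. Then for every cycle $C$ of $(V,F_1)$ there exists a cycle $D$ of $(V,F_2)$ with $|V(D)|\ge 10$ and $|V(C)\cap V(D)|\ge 4$.
   Context: A 2-factor of a graph $G=(V,E)$ is a set $F\subseteq E$ such that every node is incident to exactly two edges of $F$; the components of $(V,F)$ are simple cycles; for a cycle $C$, $V(C)$ and $E(C)$ denote its node and edge sets. A set $S$ of 4 nodes is a potential 4-cycle if some 2-factor of $G$ has a cycle with node set exactly $S$. For a 2-factor $F_1$, an edge $\{x,y\}$ is a chord of a cycle $C$ of $(V,F_1)$ if $x,y\in V(C)$ and $\{x,y\}\in E\setminus F_1$; $C$ is chordless if it has no chord. A 2-factor $F_2$ is locally optimal with respect to $F_1$ if $E\setminus F_1\subseteq F_2$ and for each cycle $C$ of $(V,F_1)$, the number of components of $(V,F_2\triangle E(C))$ is not smaller than the number of components of $(V,F_2)$ ($\triangle$ is symmetric difference). A graph is cubic if every node has degree exactly 3. *)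

theory Defs
  imports Main
begin

definition simple_graph :: "'a set \<Rightarrow> 'a set set \<Rightarrow> bool" where
  "simple_graph V E \<longleftrightarrow> finite V \<and>
     (\<forall>e\<in>E. \<exists>x y. x \<noteq> y \<and> x \<in> V \<and> y \<in> V \<and> e = {x, y})"

definition degree :: "'a set set \<Rightarrow> 'a \<Rightarrow> nat" where
  "degree F v = card {e\<in>F. v \<in> e}"

definition cubic :: "'a set \<Rightarrow> 'a set set \<Rightarrow> bool" where
  "cubic V E \<longleftrightarrow> (\<forall>v\<in>V. degree E v = 3)"

definition bipartite :: "'a set \<Rightarrow> 'a set set \<Rightarrow> bool" where
  "bipartite V E \<longleftrightarrow> (\<exists>A\<subseteq>V. \<forall>e\<in>E. card (e \<inter> A) = 1)"

definition two_factor :: "'a set \<Rightarrow> 'a set set \<Rightarrow> 'a set set \<Rightarrow> bool" where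
  "two_factor V E F \<longleftrightarrow> F \<subseteq> E \<and> (\<forall>v\<in>V. degree F v = 2)"

definition adj :: "'a set set \<Rightarrow> 'a \<Rightarrow> 'a \<Rightarrow> bool" where
  "adj F x y \<longleftrightarrow> {x, y} \<in> F"

definition components :: "'a set \<Rightarrow> 'a set set \<Rightarrow> 'a set set" where
  "components V F = {{u\<in>V. (adj F)\<^sup>*\<^sup>* v u} | v. v \<in> V}"

definition comp_edges :: "'a set set \<Rightarrow> 'a set \<Rightarrow> 'a set set" where
  "comp_edges F C = {e\<in>F. e \<subseteq> C}"

definition potential_4_cycle :: "'a set \<Rightarrow> 'a set set \<Rightarrow> 'a set \<Rightarrow> bool" where
  "potential_4_cycle V E S \<longleftrightarrow> card S = 4 \<and>
     (\<exists>F. two_factor V E F \<and> S \<in> components V F)"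

definition chordless :: "'a set set \<Rightarrow> 'a set set \<Rightarrow> 'a set \<Rightarrow> bool" where
  "chordless E F1 C \<longleftrightarrow> \<not> (\<exists>x y. x \<in> C \<and> y \<in> C \<and> {x, y} \<in> E - F1)"

definition locally_optimal :: "'a set \<Rightarrow> 'a set set \<Rightarrow> 'a set set \<Rightarrow> 'a set set \<Rightarrow> bool" where
  "locally_optimal V E F1 F2 \<longleftrightarrow> two_factor V E F2 \<and> E - F1 \<subseteq> F2 \<and>
     (\<forall>C\<in>components V F1.
        card (components V ((F2 - comp_edges F1 C) \<union> (comp_edges F1 C - F2)))
          \<ge> card (components V F2))"

end

theory Submission
  imports Defs
begin

(*
  Let m, n, q be the partner functions of the perfect matchings E - F1, F1 \<inter> F2 and F1 - F2,
  so that F2-cycles alternate m and n, and F1-cycles alternate n and q.  Suppose a cycle C of F1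
  meets every F2-cycle of length at least 10 in fewer than 4 nodes.  As C is chordless, m maps
  the part of an F2-cycle D inside C injectively to the part outside, so D meets C in 2 or 4 nodes.
  Flipping the edges of C in F2 yields a 2-factor F2' whose cycles meet C in at least 4 nodes,
  and local optimality forces every F2- and F2'-cycle through C to meet it in exactly 4 nodes.
  Then the detour x \<mapsto> m (n (m x)) maps C into itself and commutes with n and q, hence acts on C
  as a rotation or a reflection.  A rotation contradicts bipartiteness (the detour is an odd walk,
  a rotation of C an even one).  A reflection fixes an edge {y, n y} or {y, q y} of C, so that
  y, m y, n (m y) would span a 4-cycle of F2 or of the flipped 2-factor F2'.
*)

lemma even_card_if_involution:
  assumes "finite S" "\<And>x. x \<in> S \<Longrightarrow> f x \<in> S \<and> f x \<noteq> x \<and> f (f x) = x"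
  shows "even (card S)"
  using assms
proof (induction S rule: finite_psubset_induct)
  case (psubset S)
  show ?case
  proof (cases "S = {}")
    case False
    then obtain a where a: "a \<in> S" by blast
    let ?S' = "S - {a, f a}"
    have pair: "{a, f a} \<subseteq> S" "card {a, f a} = 2" using psubset.prems[OF a] a by auto
    have closed: "f x \<in> ?S' \<and> f x \<noteq> x \<and> f (f x) = x" if "x \<in> ?S'" for x
    proof -
      have x: "x \<in> S" "x \<noteq> a" "x \<noteq> f a" using that by auto
      have "f x \<noteq> a" "f x \<noteq> f a"
        using psubset.prems[OF x(1)] psubset.prems[OF a] x(2,3) by metis+
      then show ?thesis using psubset.prems[OF x(1)] by blast
    qed
    have "?S' \<subset> S" using a by blast
    then have "even (card ?S')" using closed by (rule psubset.IH)
    moreover have "card ?S' = card S - 2" "2 \<le> card S"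
      using card_Diff_subset[OF _ pair(1)] card_mono[OF psubset.hyps pair(1)] pair(2)
        finite_subset[OF pair(1) psubset.hyps] by auto
    ultimately show ?thesis by presburger
  qed simp
qed

lemma sums_squeeze:
  fixes f g :: "'a \<Rightarrow> nat"
  assumes "finite I" "finite J" "card I \<le> card J" "sum f I = sum g J"
    and f: "\<And>i. i \<in> I \<Longrightarrow> f i \<le> c" and g: "\<And>j. j \<in> J \<Longrightarrow> c \<le> g j"
  shows "i \<in> I \<Longrightarrow> f i = c" and "j \<in> J \<Longrightarrow> g j = c"
proof -
  have "sum f I \<le> card I * c" "card J * c \<le> sum g J"
    using sum_bounded_above[of I f c] sum_bounded_below[of J c g] f g by auto
  moreover have "card I * c \<le> card J * c" using assms(3) by simp
  ultimately have eq: "sum f I = card I * c" "sum g J = card J * c" using assms(4) by linarith+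
  show "f i = c" if "i \<in> I"
  proof (rule ccontr)
    assume "f i \<noteq> c"
    then have "sum f I < sum (\<lambda>_. c) I"
      using sum_strict_mono_ex1[OF assms(1)] f that by (metis le_neq_implies_less)
    then show False using eq by simp
  qed
  show "g j = c" if "j \<in> J"
  proof (rule ccontr)
    assume "g j \<noteq> c"
    then have "sum (\<lambda>_. c) J < sum g J"
      using sum_strict_mono_ex1[OF assms(2)] g that by (metis le_neq_implies_less)
    then show False using eq by simp
  qed
qed

lemma funpow_involutions_reflect:
  assumes "\<And>z. n (n z) = z" "\<And>z. q (q z) = z"
  shows "((q \<circ> n) ^^ i) (n (((q \<circ> n) ^^ i) z)) = n z"
proof (induction i arbitrary: z)
  case (Suc i)
  let ?w = "((q \<circ> n) ^^ i) z"
  have "((q \<circ> n) ^^ Suc i) (n (((q \<circ> n) ^^ Suc i) z)) = ((q \<circ> n) ^^ Suc i) (n ((q \<circ> n) ?w))"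
    by (simp only: funpow.simps(2) comp_apply)
  also have "\<dots> = ((q \<circ> n) ^^ i) ((q \<circ> n) (n ((q \<circ> n) ?w)))"
    by (simp only: funpow_Suc_right comp_apply)
  also have "\<dots> = ((q \<circ> n) ^^ i) (n ?w)" by (simp add: assms)
  also have "\<dots> = n z" by (rule Suc.IH)
  finally show ?case .
qed simp

lemma card_two_pairs:
  assumes "f (f x) = x" "f (f y) = y" "f x \<noteq> x" "f y \<noteq> y" "y \<noteq> x" "y \<noteq> f x"
  shows "card {x, f x, y, f y} = 4"
  using assms by (auto simp: card_insert_if)

lemma eq_of_card_4:
  assumes "finite S" "card S = 4" "{a, b, c, d} \<subseteq> S" "card {a, b, c, d} = 4"
    and "y \<in> S" "y \<noteq> a" "y \<noteq> b" "y \<noteq> c"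
  shows "y = d"
  using card_subset_eq[OF assms(1,3)] assms(2,4-) by auto

section \<open>Alternating cycles of two perfect matchings\<close>

text \<open>
  Two disjoint perfect matchings of \<open>V\<close>, given by their partner functions \<open>m\<close> and \<open>p\<close>.
  Their union is a 2-factor, whose cycles are traversed by alternating \<open>m\<close>- and \<open>p\<close>-steps.
\<close>

definition alt_cycle :: "('a \<Rightarrow> 'a) \<Rightarrow> ('a \<Rightarrow> 'a) \<Rightarrow> 'a \<Rightarrow> 'a set" where
  "alt_cycle m p x = range (\<lambda>i. ((p \<circ> m) ^^ i) x) \<union> range (\<lambda>i. m (((p \<circ> m) ^^ i) x))"

lemma alt_iter_cong:
  assumes "\<And>y. y \<notin> C \<Longrightarrow> p' y = p y" and "\<forall>k<i. m (((p \<circ> m) ^^ k) x) \<notin> C"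
  shows "((p' \<circ> m) ^^ i) x = ((p \<circ> m) ^^ i) x"
  using assms(2) by (induction i) (auto simp: assms(1))

lemma alt_cycle_iter: "((p \<circ> m) ^^ i) x \<in> alt_cycle m p x"
  and alt_cycle_m_iter: "m (((p \<circ> m) ^^ i) x) \<in> alt_cycle m p x"
  unfolding alt_cycle_def by auto

lemma alt_cycle_cong:
  assumes "\<And>y. y \<notin> C \<Longrightarrow> p' y = p y" and "alt_cycle m p x \<inter> C = {}"
  shows "alt_cycle m p' x = alt_cycle m p x"
proof -
  have avoid: "m (((p \<circ> m) ^^ k) x) \<notin> C" for k
    using assms(2) alt_cycle_m_iter by fast
  have "((p' \<circ> m) ^^ i) x = ((p \<circ> m) ^^ i) x" for i
    by (rule alt_iter_cong[where C = C]) (use assms(1) avoid in auto)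
  then show ?thesis unfolding alt_cycle_def by (simp only:)
qed

locale matching_pair =
  fixes V :: "'a set" and m p :: "'a \<Rightarrow> 'a"
  assumes finite_V: "finite V"
    and m_m [simp]: "\<And>x. m (m x) = x" and p_p [simp]: "\<And>x. p (p x) = x"
    and m_in: "\<And>x. x \<in> V \<Longrightarrow> m x \<in> V" and p_in: "\<And>x. x \<in> V \<Longrightarrow> p x \<in> V"
    and m_neq: "\<And>x. x \<in> V \<Longrightarrow> m x \<noteq> x" and p_neq: "\<And>x. x \<in> V \<Longrightarrow> p x \<noteq> x"
    and m_neq_p: "\<And>x. x \<in> V \<Longrightarrow> m x \<noteq> p x"
begin

lemma alt_iter_in: "x \<in> V \<Longrightarrow> ((p \<circ> m) ^^ i) x \<in> V"
  by (induction i) (auto simp: m_in p_in)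

lemma alt_iter_period:
  assumes "x \<in> V" shows "\<exists>j>0. ((p \<circ> m) ^^ j) x = x"
proof -
  let ?f = "\<lambda>i. ((p \<circ> m) ^^ i) x"
  have "?f ` {..card V} \<subseteq> V" using alt_iter_in assms by auto
  then have "\<not> inj_on ?f {..card V}"
    using card_inj_on_le[of ?f "{..card V}" V] finite_V by auto
  then obtain a b where ab: "a < b" "?f a = ?f b"
    unfolding inj_on_def by (metis linorder_neqE_nat)
  have inj: "inj ((p \<circ> m) ^^ a)"
    by (intro inj_fn inj_compose) (metis injI m_m p_p)+
  have "((p \<circ> m) ^^ a) (?f (b - a)) = ((p \<circ> m) ^^ a) x"
    using ab by (metis comp_apply funpow_add le_add_diff_inverse less_imp_le)
  then have "?f (b - a) = x" by (rule injD[OF inj])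
  then show ?thesis using ab(1) by (intro exI[of _ "b - a"]) simp
qed

lemma p_eq_m_alt_iter:
  assumes "x \<in> V" shows "\<exists>i. p x = m (((p \<circ> m) ^^ i) x)"
proof -
  obtain j where "j > 0" "((p \<circ> m) ^^ j) x = x" using alt_iter_period assms by blast
  then have "p (m (((p \<circ> m) ^^ (j - 1)) x)) = x"
    by (metis Suc_diff_1 comp_apply funpow.simps(2))
  then show ?thesis by (metis p_p)
qed

lemma alt_cycle_subset: "x \<in> V \<Longrightarrow> alt_cycle m p x \<subseteq> V"
  unfolding alt_cycle_def using alt_iter_in m_in by auto

lemma alt_cycle_self: "x \<in> alt_cycle m p x"
  unfolding alt_cycle_def by (auto intro: range_eqI[of _ _ 0])

lemma alt_cycle_m: "y \<in> alt_cycle m p x \<Longrightarrow> m y \<in> alt_cycle m p x"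
  unfolding alt_cycle_def by auto

lemma alt_cycle_p:
  assumes "x \<in> V" "y \<in> alt_cycle m p x" shows "p y \<in> alt_cycle m p x"
  using assms(2) unfolding alt_cycle_def
proof (elim UnE rangeE)
  fix i assume y: "y = ((p \<circ> m) ^^ i) x"
  show "p y \<in> range (\<lambda>i. ((p \<circ> m) ^^ i) x) \<union> range (\<lambda>i. m (((p \<circ> m) ^^ i) x))"
  proof (cases i)
    case 0 then show ?thesis using p_eq_m_alt_iter[OF assms(1)] y by auto
  next
    case (Suc k) then show ?thesis using y by auto
  qed
next
  fix i assume "y = m (((p \<circ> m) ^^ i) x)"
  then have "p y = ((p \<circ> m) ^^ Suc i) x" by simp
  then show "p y \<in> range (\<lambda>i. ((p \<circ> m) ^^ i) x) \<union> range (\<lambda>i. m (((p \<circ> m) ^^ i) x))"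
    by blast
qed

lemma alt_cycle_reachable:
  assumes R: "\<And>a b. a \<in> V \<Longrightarrow> R a b \<longleftrightarrow> b = m a \<or> b = p a" and x: "x \<in> V"
  shows "R\<^sup>*\<^sup>* x u \<longleftrightarrow> u \<in> alt_cycle m p x"
proof
  assume "R\<^sup>*\<^sup>* x u"
  then show "u \<in> alt_cycle m p x"
  proof (induction rule: rtranclp_induct)
    case (step y z)
    then have "y \<in> V" using alt_cycle_subset x by blast
    then show ?case using step R alt_cycle_m alt_cycle_p x by metis
  qed (rule alt_cycle_self)
next
  have iter: "R\<^sup>*\<^sup>* x (((p \<circ> m) ^^ i) x)" for i
  proof (induction i)
    case (Suc i)
    let ?y = "((p \<circ> m) ^^ i) x"
    have "R ?y (m ?y)" "R (m ?y) (p (m ?y))"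
      using R alt_iter_in[OF x] m_in by auto
    moreover have "((p \<circ> m) ^^ Suc i) x = p (m ?y)" by simp
    ultimately show ?case using Suc by (metis rtranclp.rtrancl_into_rtrancl)
  qed simp
  have "R (((p \<circ> m) ^^ i) x) (m (((p \<circ> m) ^^ i) x))" for i
    using R alt_iter_in[OF x] by blast
  then have "R\<^sup>*\<^sup>* x (m (((p \<circ> m) ^^ i) x))" for i
    using iter rtranclp.rtrancl_into_rtrancl by metis
  then show "u \<in> alt_cycle m p x \<Longrightarrow> R\<^sup>*\<^sup>* x u"
    unfolding alt_cycle_def using iter by blast
qed

lemma alt_cycle_eq:
  assumes "x \<in> V" "u \<in> alt_cycle m p x" shows "alt_cycle m p u = alt_cycle m p x"
proof -
  let ?R = "\<lambda>a b. b = m a \<or> b = p a"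
  have "symp ?R" by (auto intro: sympI)
  then have sym: "?R\<^sup>*\<^sup>* a b \<Longrightarrow> ?R\<^sup>*\<^sup>* b a" for a b by (metis sympD symp_rtranclp)
  have u: "u \<in> V" using alt_cycle_subset assms by blast
  have "?R\<^sup>*\<^sup>* x u" using alt_cycle_reachable[of ?R] assms by blast
  then have "?R\<^sup>*\<^sup>* u w \<longleftrightarrow> ?R\<^sup>*\<^sup>* x w" for w
    using sym by (meson rtranclp_trans)
  then show ?thesis using alt_cycle_reachable[of ?R] assms(1) u by blast
qed

lemma components_eq_alt_cycles:
  assumes "\<And>x y. x \<in> V \<Longrightarrow> {x, y} \<in> F \<longleftrightarrow> y = m x \<or> y = p x"
  shows "components V F = alt_cycle m p ` V"
proof -
  have "{u \<in> V. (adj F)\<^sup>*\<^sup>* v u} = alt_cycle m p v" if "v \<in> V" for v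
    using alt_cycle_reachable[of "adj F", OF _ that] alt_cycle_subset[OF that] assms
    unfolding adj_def by blast
  then show ?thesis unfolding components_def by auto
qed

lemma alt_iter_neq_m: "y \<in> V \<Longrightarrow> ((p \<circ> m) ^^ d) y \<noteq> m y"
proof (induction d arbitrary: y rule: less_induct)
  case (less d)
  consider "d = 0" | "d = 1" | e where "d = Suc (Suc e)"
    by (metis One_nat_def not0_implies_Suc)
  then show ?case
  proof cases
    case 1 then show ?thesis using m_neq[OF less.prems] by auto
  next
    case 2 then show ?thesis using p_neq[OF m_in[OF less.prems]] by simp
  next
    case 3
    have "e < d" using 3 by simp
    moreover have "(p \<circ> m) y \<in> V" using less.prems m_in p_in by simp
    ultimately have "((p \<circ> m) ^^ e) ((p \<circ> m) y) \<noteq> m ((p \<circ> m) y)"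
      by (rule less.IH)
    moreover have "((p \<circ> m) ^^ d) y = p (m (((p \<circ> m) ^^ e) ((p \<circ> m) y)))"
      unfolding 3 by (metis comp_apply funpow.simps(2) funpow_Suc_right)
    moreover have "z = m ((p \<circ> m) y)" if "p (m z) = m y" for z
      using that by (metis comp_apply m_m p_p)
    ultimately show ?thesis by metis
  qed
qed

lemma alt_cycle_of_4:
  assumes "p (m (p (m x))) = x"
  shows "alt_cycle m p x = {x, p (m x), m x, m (p (m x))}"
proof -
  have iter: "((p \<circ> m) ^^ i) x \<in> {x, p (m x)}" for i
    by (induction i) (auto simp: assms)
  then have "m (((p \<circ> m) ^^ i) x) \<in> {m x, m (p (m x))}" for i
    by (metis insert_iff singletonD)
  then have "alt_cycle m p x \<subseteq> {x, p (m x), m x, m (p (m x))}"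
    unfolding alt_cycle_def using iter by blast
  moreover have "{x, p (m x), m x, m (p (m x))} \<subseteq> alt_cycle m p x"
    using alt_cycle_self[of x] alt_cycle_m[OF alt_cycle_self[of x]]
      alt_cycle_iter[where i = 1] alt_cycle_m_iter[where i = 1] by auto
  ultimately show ?thesis by (rule equalityI)
qed

lemma even_card_alt_cycle:
  assumes x: "x \<in> V" and C: "\<And>y. y \<in> C \<Longrightarrow> p y \<in> C"
  shows even_card_alt_cycle_inter: "even (card (alt_cycle m p x \<inter> C))"
    and even_card_alt_cycle_diff: "even (card (alt_cycle m p x - C))"
proof -
  have fin: "finite (alt_cycle m p x)"
    using alt_cycle_subset[OF x] finite_V finite_subset by blast
  have closed: "p y \<in> alt_cycle m p x \<and> p y \<noteq> y" if "y \<in> alt_cycle m p x" for y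
    using alt_cycle_p[OF x that] p_neq alt_cycle_subset[OF x] that by blast
  have out: "p y \<notin> C" if "y \<notin> C" for y using C[of "p y"] that by auto
  show "even (card (alt_cycle m p x \<inter> C))"
    by (rule even_card_if_involution[where f = p]) (use fin closed C in auto)
  show "even (card (alt_cycle m p x - C))"
    by (rule even_card_if_involution[where f = p]) (use fin closed out in auto)
qed

lemma alt_cycle_eq_of_mem:
  assumes "D \<in> alt_cycle m p ` V" "u \<in> D" shows "D = alt_cycle m p u"
  using assms alt_cycle_eq by blast

lemma sum_card_alt_cycle_inter:
  assumes "C \<subseteq> V" shows "(\<Sum>D \<in> alt_cycle m p ` C. card (D \<inter> C)) = card C"
proof -
  have finC: "finite C" using assms finite_V finite_subset by blast
  have "card (\<Union>D \<in> alt_cycle m p ` C. D \<inter> C) = (\<Sum>D \<in> alt_cycle m p ` C. card (D \<inter> C))"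
  proof (rule card_UN_disjoint)
    have "D = D'" if "D \<in> alt_cycle m p ` C" "D' \<in> alt_cycle m p ` C" "u \<in> D" "u \<in> D'" for D D' u
      using that alt_cycle_eq_of_mem assms by (metis image_mono subsetD)
    then show "\<forall>D\<in>alt_cycle m p ` C. \<forall>D'\<in>alt_cycle m p ` C. D \<noteq> D' \<longrightarrow> D \<inter> C \<inter> (D' \<inter> C) = {}"
      by blast
  qed (use finC in auto)
  moreover have "(\<Union>D \<in> alt_cycle m p ` C. D \<inter> C) = C" using alt_cycle_self by blast
  ultimately show ?thesis by simp
qed

lemma card_alt_cycles_split:
  assumes "C \<subseteq> V"
  shows "card (alt_cycle m p ` V) =
    card (alt_cycle m p ` C) + card {D \<in> alt_cycle m p ` V. D \<inter> C = {}}"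
proof -
  have "D \<in> alt_cycle m p ` C" if "D \<in> alt_cycle m p ` V" "u \<in> D" "u \<in> C" for D u
    using alt_cycle_eq_of_mem[OF that(1,2)] that(3) by blast
  then have "alt_cycle m p ` V = alt_cycle m p ` C \<union> {D \<in> alt_cycle m p ` V. D \<inter> C = {}}"
    using assms by blast
  moreover have "alt_cycle m p ` C \<inter> {D \<in> alt_cycle m p ` V. D \<inter> C = {}} = {}"
    using alt_cycle_self by blast
  moreover have "finite (alt_cycle m p ` V)" using finite_V by simp
  ultimately show ?thesis by (metis card_Un_disjoint finite_Un)
qed

end

section \<open>Perfect matchings of simple graphs\<close>

lemma simple_graph_edge:
  assumes "simple_graph V E" "{x, y} \<in> E" shows "x \<in> V" "y \<in> V" "x \<noteq> y"
proof -
  obtain a b where "a \<noteq> b" "a \<in> V" "b \<in> V" "{x, y} = {a, b}"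
    using assms unfolding simple_graph_def by blast
  then show "x \<in> V" "y \<in> V" "x \<noteq> y" by (auto simp: doubleton_eq_iff)
qed

lemma simple_graph_finite_edges:
  assumes "simple_graph V E" shows "finite E"
proof -
  have "E \<subseteq> Pow V" using assms unfolding simple_graph_def by auto
  moreover have "finite V" using assms unfolding simple_graph_def by simp
  ultimately show ?thesis using finite_subset by blast
qed

lemma degree_Un_disjoint:
  assumes "finite A" "finite B" "A \<inter> B = {}"
  shows "degree (A \<union> B) v = degree A v + degree B v"
proof -
  have "{e \<in> A \<union> B. v \<in> e} = {e \<in> A. v \<in> e} \<union> {e \<in> B. v \<in> e}" by blast
  then show ?thesis using assms unfolding degree_def by (simp add: card_Un_disjoint disjoint_iff)
qed

lemma simple_graph_edge_at:
  assumes "simple_graph V E" "e \<in> E" "v \<in> e" obtains y where "e = {v, y}"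
proof -
  obtain x y where "e = {x, y}" using assms(1,2) unfolding simple_graph_def by blast
  then show ?thesis using that assms(3) by (metis insertE insert_commute singletonD)
qed

lemma two_factor_if_adjacency:
  assumes simple: "simple_graph V E" and "F \<subseteq> E"
    and adj: "\<And>x y. x \<in> V \<Longrightarrow> {x, y} \<in> F \<longleftrightarrow> y = a x \<or> y = b x"
    and neq: "\<And>x. x \<in> V \<Longrightarrow> a x \<noteq> b x"
  shows "two_factor V E F"
  unfolding two_factor_def
proof (intro conjI ballI)
  fix v assume v: "v \<in> V"
  have "e \<in> {{v, a v}, {v, b v}}" if e: "e \<in> F" "v \<in> e" for e
  proof -
    have "e \<in> E" using e(1) assms(2) by blast
    then obtain y where "e = {v, y}" using simple_graph_edge_at[OF simple _ e(2)] by blast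
    then show ?thesis using adj[OF v] e(1) by auto
  qed
  moreover have "{v, a v} \<in> F" "{v, b v} \<in> F" using adj[OF v] by blast+
  ultimately have "{e \<in> F. v \<in> e} = {{v, a v}, {v, b v}}" by blast
  moreover have "{v, a v} \<noteq> {v, b v}" using neq[OF v] by (auto simp: doubleton_eq_iff)
  ultimately show "degree F v = 2" unfolding degree_def by simp
qed (fact assms(2))

lemma bipartite_sides:
  assumes "simple_graph V E" "bipartite V E"
  obtains A where "\<And>u v. {u, v} \<in> E \<Longrightarrow> u \<in> A \<longleftrightarrow> v \<notin> A"
proof -
  obtain A where A: "\<forall>e\<in>E. card (e \<inter> A) = 1" using assms(2) unfolding bipartite_def by blast
  have "u \<in> A \<longleftrightarrow> v \<notin> A" if e: "{u, v} \<in> E" for u v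
  proof -
    have "u \<noteq> v" using simple_graph_edge(3)[OF assms(1) e] .
    moreover have "card ({u, v} \<inter> A) = 1" using A e by blast
    ultimately show ?thesis by (cases "u \<in> A"; cases "v \<in> A") auto
  qed
  then show ?thesis using that by blast
qed

text \<open>Outside \<open>V\<close> the partner is the identity, so that \<open>partner V M\<close> is an involution.\<close>

definition partner :: "'a set \<Rightarrow> 'a set set \<Rightarrow> 'a \<Rightarrow> 'a" where
  "partner V M x = (if x \<in> V then THE y. {x, y} \<in> M else x)"

locale perfect_matching =
  fixes V :: "'a set" and E M :: "'a set set"
  assumes simple: "simple_graph V E" and sub: "M \<subseteq> E" and degree_1: "\<And>v. v \<in> V \<Longrightarrow> degree M v = 1"
begin

lemma partner_iff:
  assumes x: "x \<in> V" shows "{x, y} \<in> M \<longleftrightarrow> y = partner V M x"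
proof -
  obtain e where "{e' \<in> M. x \<in> e'} = {e}"
    using degree_1[OF x] unfolding degree_def by (rule card_1_singletonE)
  then have e: "e' \<in> M \<and> x \<in> e' \<longleftrightarrow> e' = e" for e'
    by (metis (mono_tags, lifting) mem_Collect_eq singleton_iff)
  then have "e \<in> E" "x \<in> e" using sub by auto
  then obtain z where z: "e = {x, z}" using simple_graph_edge_at[OF simple] by blast
  have "{x, y} \<in> M \<longleftrightarrow> y = z" for y
    using e[of "{x, y}"] z by (auto simp: doubleton_eq_iff)
  moreover from this have "partner V M x = z" unfolding partner_def using x by simp
  ultimately show ?thesis by simp
qed

lemma partner_edge: "x \<in> V \<Longrightarrow> {x, partner V M x} \<in> M"
  using partner_iff by blast

lemma partner_edge_E: "x \<in> V \<Longrightarrow> {x, partner V M x} \<in> E"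
  using partner_edge sub by blast

lemma partner_in: "x \<in> V \<Longrightarrow> partner V M x \<in> V"
  by (rule simple_graph_edge(2)[OF simple partner_edge_E])

lemma partner_neq: "x \<in> V \<Longrightarrow> partner V M x \<noteq> x"
  using simple_graph_edge(3)[OF simple partner_edge_E] by metis

lemma partner_partner: "partner V M (partner V M x) = x"
proof (cases "x \<in> V")
  case True
  then have "{partner V M x, x} \<in> M" using partner_edge by (simp add: insert_commute)
  then show ?thesis using partner_iff partner_in True by simp
qed (simp add: partner_def)

lemma inj_partner: "inj (partner V M)"
  by (metis injI partner_partner)

end

lemma partner_neq_partner:
  assumes "perfect_matching V E M" "perfect_matching V E M'" "M \<inter> M' = {}" "x \<in> V"
  shows "partner V M x \<noteq> partner V M' x"
  using perfect_matching.partner_edge[OF assms(1,4)] perfect_matching.partner_edge[OF assms(2,4)]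
    assms(3) by auto

section \<open>Two 2-factors sharing the edges outside the first\<close>

locale two_factor_pair =
  fixes V :: "'a set" and E F1 F2 :: "'a set set"
  assumes simple: "simple_graph V E" and cubic: "cubic V E"
    and F1: "two_factor V E F1" and F2: "two_factor V E F2" and non_F1_sub_F2: "E - F1 \<subseteq> F2"
begin

text \<open>
  Every edge at a node lies in exactly one of the perfect matchings \<open>E - F1\<close>, \<open>F1 \<inter> F2\<close>
  and \<open>F1 - F2\<close>; \<open>m\<close>, \<open>n\<close>, \<open>q\<close> are the corresponding partner functions.
\<close>

abbreviation "m \<equiv> partner V (E - F1)"
abbreviation "n \<equiv> partner V (F1 \<inter> F2)"
abbreviation "q \<equiv> partner V (F1 - F2)"

lemma finite_E: "finite E"
  by (rule simple_graph_finite_edges[OF simple])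

lemma F1_sub: "F1 \<subseteq> E" and F2_sub: "F2 \<subseteq> E"
  using F1 F2 unfolding two_factor_def by auto

lemma degree_split:
  assumes "A \<union> B \<subseteq> E" "A \<inter> B = {}" "v \<in> V" "degree (A \<union> B) v = degree A v + 1"
  shows "degree B v = 1"
  using assms degree_Un_disjoint[of A B v] finite_subset[OF _ finite_E] by auto

lemma matching_E_minus_F1: "perfect_matching V E (E - F1)"
proof
  fix v assume v: "v \<in> V"
  have "E = F1 \<union> (E - F1)" using F1_sub by blast
  then show "degree (E - F1) v = 1"
    using degree_split[of F1 "E - F1" v] v cubic F1 unfolding cubic_def two_factor_def by auto
qed (use simple in auto)

lemma matching_F1_inter_F2: "perfect_matching V E (F1 \<inter> F2)"
proof
  fix v assume v: "v \<in> V"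
  have "F2 = (E - F1) \<union> (F1 \<inter> F2)" using F2_sub non_F1_sub_F2 by blast
  moreover have "degree (E - F1) v = 1" using perfect_matching.degree_1[OF matching_E_minus_F1 v] .
  ultimately show "degree (F1 \<inter> F2) v = 1"
    using degree_split[of "E - F1" "F1 \<inter> F2" v] v F2 F1_sub unfolding two_factor_def by auto
qed (use simple F1_sub in auto)

lemma matching_F1_minus_F2: "perfect_matching V E (F1 - F2)"
proof
  fix v assume v: "v \<in> V"
  have "F1 = (F1 \<inter> F2) \<union> (F1 - F2)" by blast
  moreover have "degree (F1 \<inter> F2) v = 1" using perfect_matching.degree_1[OF matching_F1_inter_F2 v] .
  ultimately show "degree (F1 - F2) v = 1"
    using degree_split[of "F1 \<inter> F2" "F1 - F2" v] v F1 F1_sub unfolding two_factor_def by auto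
qed (use simple F1_sub in auto)

sublocale M: perfect_matching V E "E - F1" by (rule matching_E_minus_F1)
sublocale N: perfect_matching V E "F1 \<inter> F2" by (rule matching_F1_inter_F2)
sublocale Q: perfect_matching V E "F1 - F2" by (rule matching_F1_minus_F2)

lemma F1_iff: "x \<in> V \<Longrightarrow> {x, y} \<in> F1 \<longleftrightarrow> y = n x \<or> y = q x"
  using N.partner_iff Q.partner_iff by blast

lemma F2_iff: "x \<in> V \<Longrightarrow> {x, y} \<in> F2 \<longleftrightarrow> y = m x \<or> y = n x"
  using M.partner_iff N.partner_iff F2_sub non_F1_sub_F2 by blast

lemma m_neq_n: "x \<in> V \<Longrightarrow> m x \<noteq> n x"
  and m_neq_q: "x \<in> V \<Longrightarrow> m x \<noteq> q x"
  and n_neq_q: "x \<in> V \<Longrightarrow> n x \<noteq> q x"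
  by (rule partner_neq_partner; unfold_locales?; blast)+

sublocale F2_cycles: matching_pair V m n
  by unfold_locales
    (auto simp: M.partner_in N.partner_in M.partner_neq N.partner_neq
      M.partner_partner N.partner_partner m_neq_n simple[unfolded simple_graph_def])

sublocale F1_cycles: matching_pair V n q
  by unfold_locales
    (auto simp: N.partner_in Q.partner_in N.partner_neq Q.partner_neq
      N.partner_partner Q.partner_partner n_neq_q simple[unfolded simple_graph_def])

lemma components_F1: "components V F1 = alt_cycle n q ` V"
  using F1_cycles.components_eq_alt_cycles F1_iff by blast

lemma components_F2: "components V F2 = alt_cycle m n ` V"
  using F2_cycles.components_eq_alt_cycles F2_iff by blast

end

section \<open>A component of the first 2-factor violating the claim\<close>

locale sparse_component = two_factor_pair +
  fixes C :: "'a set"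
  assumes bipartite: "bipartite V E"
    and no_potential_4_cycle: "\<not> (\<exists>S. potential_4_cycle V E S)"
    and chordless: "\<forall>C\<in>components V F1. chordless E F1 C"
    and locally_optimal: "locally_optimal V E F1 F2"
    and C_component: "C \<in> components V F1"
    and sparse: "\<And>D. D \<in> components V F2 \<Longrightarrow> 4 \<le> card (C \<inter> D) \<Longrightarrow> card D < 10"
begin

lemma C_eq: obtains x0 where "x0 \<in> V" "C = alt_cycle n q x0"
  using C_component components_F1 by auto

lemma C_sub: "C \<subseteq> V"
  using C_eq F1_cycles.alt_cycle_subset by metis

lemma finite_C: "finite C"
  using C_sub F1_cycles.finite_V finite_subset by blast

lemma n_in_C: "x \<in> C \<Longrightarrow> n x \<in> C"
  using C_eq F1_cycles.alt_cycle_m by metis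

lemma q_in_C: "x \<in> C \<Longrightarrow> q x \<in> C"
  using C_eq F1_cycles.alt_cycle_p by metis

lemma n_in_C_iff: "n x \<in> C \<longleftrightarrow> x \<in> C"
  using n_in_C N.partner_partner by metis

lemma m_notin_C: assumes x: "x \<in> C" shows "m x \<notin> C"
proof
  assume "m x \<in> C"
  moreover have "{x, m x} \<in> E - F1" using M.partner_edge x C_sub by blast
  moreover have "chordless E F1 C" using chordless C_component by blast
  ultimately show False using x unfolding chordless_def by blast
qed

text \<open>Flipping the edges of \<open>C\<close> in \<open>F2\<close> replaces \<open>n\<close> by \<open>q\<close> on \<open>C\<close>.\<close>

definition n' :: "'a \<Rightarrow> 'a" where
  "n' x = (if x \<in> C then q x else n x)"

definition F2' :: "'a set set" where
  "F2' = (F2 - comp_edges F1 C) \<union> (comp_edges F1 C - F2)"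

lemma n'_eq_n: "y \<notin> C \<Longrightarrow> n' y = n y"
  and n'_eq_q: "y \<in> C \<Longrightarrow> n' y = q y"
  unfolding n'_def by simp_all

lemma n'_m: "x \<in> C \<Longrightarrow> n' (m x) = n (m x)"
  using n'_eq_n m_notin_C by simp

lemma F2'_iff:
  assumes x: "x \<in> V" shows "{x, y} \<in> F2' \<longleftrightarrow> y = m x \<or> y = n' x"
proof -
  have "{x, y} \<in> comp_edges F1 C \<longleftrightarrow> x \<in> C \<and> (y = n x \<or> y = q x)"
    unfolding comp_edges_def using F1_iff[OF x] n_in_C q_in_C by auto
  then show ?thesis
    unfolding F2'_def n'_def using F2_iff[OF x] m_neq_n[OF x] m_neq_q[OF x] n_neq_q[OF x] by auto
qed

lemma n'_n' [simp]: "n' (n' x) = x"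
  by (auto simp: n'_def q_in_C n_in_C_iff Q.partner_partner N.partner_partner)

lemma n'_in: "x \<in> V \<Longrightarrow> n' x \<in> V"
  and n'_neq: "x \<in> V \<Longrightarrow> n' x \<noteq> x"
  and m_neq_n': "x \<in> V \<Longrightarrow> m x \<noteq> n' x"
  by (simp_all add: n'_def N.partner_in Q.partner_in N.partner_neq Q.partner_neq m_neq_n m_neq_q)

sublocale F2'_cycles: matching_pair V m n'
  by unfold_locales
    (auto simp: n'_in n'_neq m_neq_n' M.partner_in M.partner_neq M.partner_partner
      simple[unfolded simple_graph_def])

lemma F2'_two_factor: "two_factor V E F2'"
proof (rule two_factor_if_adjacency[OF simple _ F2'_iff F2'_cycles.m_neq_p])
  show "F2' \<subseteq> E" unfolding F2'_def comp_edges_def using F1_sub F2_sub by blast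
qed

lemma components_F2': "components V F2' = alt_cycle m n' ` V"
  using F2'_cycles.components_eq_alt_cycles F2'_iff by blast

lemma card_components_F2_le: "card (alt_cycle m n ` V) \<le> card (alt_cycle m n' ` V)"
proof -
  have "card (components V F2) \<le> card (components V F2')"
    using locally_optimal C_component unfolding locally_optimal_def F2'_def by blast
  then show ?thesis using components_F2 components_F2' by simp
qed

lemma card_F2_cycle_neq_4: "x \<in> V \<Longrightarrow> card (alt_cycle m n x) \<noteq> 4"
  and card_F2'_cycle_neq_4: "x \<in> V \<Longrightarrow> card (alt_cycle m n' x) \<noteq> 4"
  using no_potential_4_cycle F2 F2'_two_factor components_F2 components_F2'
  unfolding potential_4_cycle_def by blast+

lemma finite_F2_cycle: "x \<in> V \<Longrightarrow> finite (alt_cycle m n x)"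
  using F2_cycles.alt_cycle_subset F2_cycles.finite_V finite_subset by blast

lemma m_image_F2_cycle_inter_C:
  assumes x: "x \<in> V"
  shows "m ` (alt_cycle m n x \<inter> C) \<subseteq> alt_cycle m n x - C"
    and "card (alt_cycle m n x \<inter> C) \<le> card (alt_cycle m n x - C)"
proof -
  show sub: "m ` (alt_cycle m n x \<inter> C) \<subseteq> alt_cycle m n x - C"
    using F2_cycles.alt_cycle_m m_notin_C by auto
  show "card (alt_cycle m n x \<inter> C) \<le> card (alt_cycle m n x - C)"
    using card_inj_on_le[OF inj_on_subset[OF M.inj_partner subset_UNIV] sub] finite_F2_cycle[OF x]
    by simp
qed

lemma F2_cycle_sparse:
  assumes "x \<in> C" "4 \<le> card (alt_cycle m n x \<inter> C)" shows "card (alt_cycle m n x) < 10"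
  using sparse[of "alt_cycle m n x"] assms C_sub components_F2 by (auto simp: Int_commute)

lemma card_F2_cycle_inter_C_le_4:
  assumes x: "x \<in> C" shows "card (alt_cycle m n x \<inter> C) \<le> 4"
proof (rule ccontr)
  have xV: "x \<in> V" using x C_sub by blast
  assume "\<not> ?thesis"
  moreover have "card (alt_cycle m n x) = card (alt_cycle m n x \<inter> C) + card (alt_cycle m n x - C)"
    using card_Int_Diff finite_F2_cycle[OF xV] by blast
  ultimately show False
    using F2_cycle_sparse[OF x] m_image_F2_cycle_inter_C(2)[OF xV] by linarith
qed

lemma card_F2_cycle_inter_C:
  assumes x: "x \<in> C" shows "card (alt_cycle m n x \<inter> C) = 2 \<or> card (alt_cycle m n x \<inter> C) = 4"
proof -
  have xV: "x \<in> V" using x C_sub by blast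
  have sub: "{x, n x} \<subseteq> alt_cycle m n x \<inter> C"
    using F2_cycles.alt_cycle_self F2_cycles.alt_cycle_p[OF xV] x n_in_C by blast
  then have "2 \<le> card (alt_cycle m n x \<inter> C)"
    using card_mono[OF _ sub] finite_C N.partner_neq[OF xV] by fastforce
  moreover have "even (card (alt_cycle m n x \<inter> C))"
    using F2_cycles.even_card_alt_cycle_inter[OF xV] n_in_C by blast
  moreover have "c = 2 \<or> c = 4" if "2 \<le> c" "even c" "c \<le> 4" for c :: nat
    using that by presburger
  ultimately show ?thesis using card_F2_cycle_inter_C_le_4[OF x] by blast
qed

definition detour :: "'a \<Rightarrow> 'a" where
  "detour x = m (n (m x))"

lemma card_square:
  assumes "x \<in> C" "y \<in> C" "y \<noteq> x" shows "card {x, n (m x), m x, y} = 4"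
proof -
  have "x \<in> V" using assms C_sub by blast
  then have "m x \<notin> C" "n (m x) \<notin> C" "n (m x) \<noteq> m x"
    using m_notin_C[OF assms(1)] n_in_C_iff N.partner_neq M.partner_in by auto
  then show ?thesis using assms by (auto simp: card_insert_if)
qed

lemma detour_neq_n: assumes x: "x \<in> C" shows "detour x \<noteq> n x"
proof
  have xV: "x \<in> V" using x C_sub by blast
  assume "detour x = n x"
  then have "n (m (n (m x))) = x" unfolding detour_def by (metis N.partner_partner)
  then have "alt_cycle m n x = {x, n (m x), m x, n x}"
    using F2_cycles.alt_cycle_of_4 \<open>detour x = n x\<close> unfolding detour_def by metis
  then show False
    using card_F2_cycle_neq_4[OF xV] card_square[OF x n_in_C[OF x] N.partner_neq[OF xV]] by simp
qed

lemma detour_neq_q: assumes x: "x \<in> C" shows "detour x \<noteq> q x"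
proof
  have xV: "x \<in> V" using x C_sub by blast
  assume "detour x = q x"
  then have "m (n' (m x)) = q x" unfolding detour_def n'_m[OF x] .
  moreover then have "n' (m (n' (m x))) = x"
    using n'_def q_in_C[OF x] Q.partner_partner by simp
  ultimately have "alt_cycle m n' x = {x, n (m x), m x, q x}"
    using F2'_cycles.alt_cycle_of_4 n'_m[OF x] by metis
  then show False
    using card_F2'_cycle_neq_4[OF xV] card_square[OF x q_in_C[OF x] Q.partner_neq[OF xV]] by simp
qed

lemma detour_in_F2'_cycle:
  assumes "x \<in> C" shows "detour x \<in> alt_cycle m n' x"
proof -
  have "m (n' (m x)) \<in> alt_cycle m n' x"
    using alt_cycle_m_iter[where m = m and p = n' and i = 1] by simp
  then show ?thesis unfolding detour_def n'_m[OF assms] .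
qed

lemma detour_neq: "x \<in> V \<Longrightarrow> detour x \<noteq> x"
  unfolding detour_def by (metis M.partner_in M.partner_partner N.partner_neq)

lemma detour_in_F2_cycle_inter_C:
  assumes x: "x \<in> C" and card4: "card (alt_cycle m n x \<inter> C) = 4"
  shows "detour x \<in> alt_cycle m n x \<inter> C"
proof -
  let ?D = "alt_cycle m n x"
  have xV: "x \<in> V" using x C_sub by blast
  have "card (?D - C) \<le> 5"
    using F2_cycle_sparse[OF x] card4 card_Int_Diff[OF finite_F2_cycle[OF xV], of C] by simp
  moreover have "even (card (?D - C))"
    using F2_cycles.even_card_alt_cycle_diff[OF xV] n_in_C by blast
  moreover have "c \<le> 4" if "c \<le> 5" "even c" for c :: nat using that by presburger
  moreover have "card (m ` (?D \<inter> C)) = 4"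
    using card4 card_image[OF inj_on_subset[OF M.inj_partner subset_UNIV]] by simp
  ultimately have "card (?D - C) \<le> card (m ` (?D \<inter> C))" by simp
  then have image: "m ` (?D \<inter> C) = ?D - C"
    using card_seteq[OF _ m_image_F2_cycle_inter_C(1)[OF xV]] finite_F2_cycle[OF xV] by blast
  have "n (m x) \<in> ?D - C"
    using F2_cycles.alt_cycle_p[OF xV F2_cycles.alt_cycle_m[OF F2_cycles.alt_cycle_self]]
      m_notin_C[OF x] n_in_C_iff by blast
  then obtain y where "y \<in> ?D \<inter> C" "n (m x) = m y" using image by force
  then show ?thesis unfolding detour_def by simp
qed

text \<open>
  Up to its first return to \<open>C\<close>, the walk from \<open>x\<close> along \<open>F2\<close> is also a walk along \<open>F2'\<close>;
  if \<open>F2\<close> meets \<open>C\<close> only in \<open>x, n x\<close>, that first return is at \<open>n x\<close>.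
\<close>

lemma n_in_F2'_cycle:
  assumes x: "x \<in> C" and card2: "card (alt_cycle m n x \<inter> C) = 2"
  shows "n x \<in> alt_cycle m n' x"
proof -
  let ?w = "\<lambda>i. m (((n \<circ> m) ^^ i) x)"
  have xV: "x \<in> V" using x C_sub by blast
  have "{x, n x} \<subseteq> alt_cycle m n x \<inter> C"
    using F2_cycles.alt_cycle_self F2_cycles.alt_cycle_p[OF xV] x n_in_C by blast
  moreover have "card {x, n x} = card (alt_cycle m n x \<inter> C)"
    using card2 N.partner_neq[OF xV] by simp
  ultimately have D_C: "{x, n x} = alt_cycle m n x \<inter> C"
    using card_subset_eq[of "alt_cycle m n x \<inter> C" "{x, n x}"] finite_C by simp
  obtain j where "n x = ?w j" using F2_cycles.p_eq_m_alt_iter[OF xV] by blast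
  then have "\<exists>i. ?w i \<in> C" using n_in_C[OF x] by metis
  define i where "i = (LEAST i. ?w i \<in> C)"
  have wi: "?w i \<in> C" unfolding i_def using \<open>\<exists>i. ?w i \<in> C\<close> by (rule LeastI_ex)
  have before: "\<forall>k<i. ?w k \<notin> C" unfolding i_def using not_less_Least by blast
  have "((n' \<circ> m) ^^ i) x = ((n \<circ> m) ^^ i) x"
    by (rule alt_iter_cong[where C = C]) (use n'_eq_n before in auto)
  then have "?w i \<in> alt_cycle m n' x" by (metis alt_cycle_m_iter)
  moreover have "?w i \<noteq> x"
    using F2_cycles.alt_iter_neq_m[OF xV, of i] M.partner_partner by metis
  then have "?w i = n x"
    using wi D_C alt_cycle_m_iter[where m = m and p = n and i = i and x = x] by blast
  ultimately show ?thesis by simp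
qed

lemma card_F2'_cycle_inter_C_ge_4:
  assumes x: "x \<in> C" shows "4 \<le> card (alt_cycle m n' x \<inter> C)"
proof -
  let ?D' = "alt_cycle m n' x"
  have xV: "x \<in> V" using x C_sub by blast
  obtain y where y: "y \<in> ?D' \<inter> C" "y \<noteq> x" "y \<noteq> q x"
  proof (cases "card (alt_cycle m n x \<inter> C) = 4")
    case True
    then show ?thesis using that detour_in_F2_cycle_inter_C[OF x] detour_in_F2'_cycle[OF x]
        detour_neq[OF xV] detour_neq_q[OF x] by blast
  next
    case False
    then show ?thesis using that card_F2_cycle_inter_C[OF x] n_in_F2'_cycle[OF x] n_in_C[OF x]
        N.partner_neq[OF xV] n_neq_q[OF xV] by blast
  qed
  have "q x \<in> ?D'"
    using F2'_cycles.alt_cycle_p[OF xV F2'_cycles.alt_cycle_self] x unfolding n'_def by simp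
  then have "{x, q x, y} \<subseteq> ?D' \<inter> C" using y x q_in_C F2'_cycles.alt_cycle_self by blast
  moreover have "card {x, q x, y} = 3" using y Q.partner_neq[OF xV] by auto
  ultimately have "3 \<le> card (?D' \<inter> C)" using finite_C by (metis card_mono finite_Int)
  moreover have "even (card (?D' \<inter> C))"
    using F2'_cycles.even_card_alt_cycle_inter[OF xV] q_in_C unfolding n'_def by simp
  moreover have "4 \<le> c" if "3 \<le> c" "even c" for c :: nat using that by presburger
  ultimately show ?thesis by blast
qed

lemma F2_cycles_avoiding_C:
  "{D \<in> alt_cycle m n ` V. D \<inter> C = {}} = {D \<in> alt_cycle m n' ` V. D \<inter> C = {}}"
proof -
  have "alt_cycle m n' x = alt_cycle m n x" if "alt_cycle m n x \<inter> C = {}" for x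
    by (rule alt_cycle_cong[where C = C]) (use n'_eq_n that in auto)
  moreover have "alt_cycle m n x = alt_cycle m n' x" if "alt_cycle m n' x \<inter> C = {}" for x
    by (rule alt_cycle_cong[where C = C]) (use n'_eq_n that in auto)
  ultimately show ?thesis by (auto simp: image_iff)
qed

lemma card_F2_cycles_meeting_C_le: "card (alt_cycle m n ` C) \<le> card (alt_cycle m n' ` C)"
  using card_components_F2_le F2_cycles_avoiding_C
    F2_cycles.card_alt_cycles_split[OF C_sub] F2'_cycles.card_alt_cycles_split[OF C_sub]
  by simp

text \<open>
  Summing the intersections with \<open>C\<close> over the cycles meeting \<open>C\<close> gives \<open>card C\<close> for both
  \<open>F2\<close> and \<open>F2'\<close>; the bounds \<open>\<le> 4\<close> and \<open>\<ge> 4\<close> together with local optimality force equality.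
\<close>

lemma card_cycles_inter_C_eq_4:
  assumes x: "x \<in> C"
  shows "card (alt_cycle m n x \<inter> C) = 4" and "card (alt_cycle m n' x \<inter> C) = 4"
proof -
  let ?f = "\<lambda>D. card (D \<inter> C)"
  have "sum ?f (alt_cycle m n ` C) = sum ?f (alt_cycle m n' ` C)"
    using F2_cycles.sum_card_alt_cycle_inter F2'_cycles.sum_card_alt_cycle_inter C_sub by simp
  note squeeze = sums_squeeze[OF _ _ card_F2_cycles_meeting_C_le this]
  show "card (alt_cycle m n x \<inter> C) = 4"
    using squeeze(1) finite_C card_F2_cycle_inter_C_le_4 card_F2'_cycle_inter_C_ge_4 x by blast
  show "card (alt_cycle m n' x \<inter> C) = 4"
    using squeeze(2) finite_C card_F2_cycle_inter_C_le_4 card_F2'_cycle_inter_C_ge_4 x by blast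
qed

lemma detour_facts:
  assumes x: "x \<in> C"
  shows "detour x \<in> C" "detour x \<in> alt_cycle m n x" "detour x \<in> alt_cycle m n' x"
    and "detour x \<noteq> x" "detour x \<noteq> n x" "detour x \<noteq> q x"
  using detour_in_F2_cycle_inter_C[OF x card_cycles_inter_C_eq_4(1)[OF x]]
    detour_in_F2'_cycle[OF x] detour_neq x C_sub detour_neq_n[OF x] detour_neq_q[OF x] by auto

lemma detour_inj: "detour a = detour b \<Longrightarrow> a = b"
  unfolding detour_def by (metis M.partner_partner N.partner_partner)

lemma detour_n: assumes x: "x \<in> C" shows "detour (n x) = n (detour x)"
proof (rule eq_of_card_4)
  let ?D = "alt_cycle m n x"
  have xV: "x \<in> V" using x C_sub by blast
  have P: "detour x \<in> C" "detour x \<in> ?D" "detour x \<noteq> x" "detour x \<noteq> n x"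
    using detour_facts[OF x] by auto
  have nx: "n x \<in> ?D" using F2_cycles.alt_cycle_p[OF xV F2_cycles.alt_cycle_self] .
  show "{x, n x, detour x, n (detour x)} \<subseteq> ?D \<inter> C"
    using F2_cycles.alt_cycle_self F2_cycles.alt_cycle_p[OF xV P(2)] nx P x n_in_C by blast
  show "card {x, n x, detour x, n (detour x)} = 4"
    using P card_two_pairs[of n] N.partner_neq C_sub xV N.partner_partner by blast
  have "alt_cycle m n (n x) = ?D" using F2_cycles.alt_cycle_eq[OF xV nx] .
  then show "detour (n x) \<in> ?D \<inter> C" using detour_facts(1,2)[OF n_in_C[OF x]] by blast
  show "detour (n x) \<noteq> x" using detour_facts(5)[OF n_in_C[OF x]] N.partner_partner by metis
  show "detour (n x) \<noteq> n x" using detour_facts(4)[OF n_in_C[OF x]] .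
  show "detour (n x) \<noteq> detour x" using detour_inj N.partner_neq[OF xV] by metis
qed (use finite_C card_cycles_inter_C_eq_4(1)[OF x] in auto)

lemma detour_q: assumes x: "x \<in> C" shows "detour (q x) = q (detour x)"
proof (rule eq_of_card_4)
  let ?D' = "alt_cycle m n' x"
  have xV: "x \<in> V" using x C_sub by blast
  have P: "detour x \<in> C" "detour x \<in> ?D'" "detour x \<noteq> x" "detour x \<noteq> q x"
    using detour_facts[OF x] by auto
  have qx: "q x \<in> ?D'"
    using F2'_cycles.alt_cycle_p[OF xV F2'_cycles.alt_cycle_self] n'_eq_q[OF x] by simp
  have "q (detour x) \<in> ?D'"
    using F2'_cycles.alt_cycle_p[OF xV P(2)] n'_eq_q[OF P(1)] by simp
  then show "{x, q x, detour x, q (detour x)} \<subseteq> ?D' \<inter> C"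
    using F2'_cycles.alt_cycle_self qx P x q_in_C by blast
  show "card {x, q x, detour x, q (detour x)} = 4"
    using P card_two_pairs[of q] Q.partner_neq C_sub xV Q.partner_partner by blast
  have "alt_cycle m n' (q x) = ?D'" using F2'_cycles.alt_cycle_eq[OF xV qx] .
  then show "detour (q x) \<in> ?D' \<inter> C" using detour_facts(1,3)[OF q_in_C[OF x]] by blast
  show "detour (q x) \<noteq> x" using detour_facts(6)[OF q_in_C[OF x]] Q.partner_partner by metis
  show "detour (q x) \<noteq> q x" using detour_facts(4)[OF q_in_C[OF x]] .
  show "detour (q x) \<noteq> detour x" using detour_inj Q.partner_neq[OF xV] by metis
qed (use finite_C card_cycles_inter_C_eq_4(2)[OF x] in auto)

text \<open>An odd walk \<open>x, m x, n (m x), detour x\<close> cannot end where an even walk along \<open>C\<close> does.\<close>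

lemma detour_neq_rotation:
  assumes x: "x \<in> V" shows "detour x \<noteq> ((q \<circ> n) ^^ j) x"
proof -
  obtain A where A: "\<And>u v. {u, v} \<in> E \<Longrightarrow> u \<in> A \<longleftrightarrow> v \<notin> A"
    using bipartite_sides[OF simple bipartite] by blast
  have "((q \<circ> n) ^^ i) x \<in> V \<and> (((q \<circ> n) ^^ i) x \<in> A \<longleftrightarrow> x \<in> A)" for i
  proof (induction i)
    case (Suc i)
    let ?y = "((q \<circ> n) ^^ i) x"
    have y: "?y \<in> V" using Suc.IH by blast
    have step: "((q \<circ> n) ^^ Suc i) x = q (n ?y)" by simp
    have "?y \<in> A \<longleftrightarrow> n ?y \<notin> A" "n ?y \<in> A \<longleftrightarrow> q (n ?y) \<notin> A"
      using A N.partner_edge_E[OF y] Q.partner_edge_E[OF N.partner_in[OF y]] by blast+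
    then show ?case unfolding step using Suc.IH Q.partner_in N.partner_in y by blast
  qed (simp add: x)
  moreover have "x \<in> A \<longleftrightarrow> detour x \<notin> A"
    using A[OF M.partner_edge_E[OF x]] A[OF N.partner_edge_E[OF M.partner_in[OF x]]]
      A[OF M.partner_edge_E[OF N.partner_in[OF M.partner_in[OF x]]]]
    unfolding detour_def by blast
  ultimately show ?thesis by metis
qed

lemma rotation_in_C: "y \<in> C \<Longrightarrow> ((q \<circ> n) ^^ i) y \<in> C"
  by (induction i) (auto simp: n_in_C q_in_C)

lemma detour_rotation:
  assumes y: "y \<in> C" shows "detour (((q \<circ> n) ^^ i) y) = ((q \<circ> n) ^^ i) (detour y)"
proof (induction i)
  case (Suc i)
  let ?z = "((q \<circ> n) ^^ i) y"
  have z: "?z \<in> C" by (rule rotation_in_C[OF y])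
  have rot: "((q \<circ> n) ^^ Suc i) u = q (n (((q \<circ> n) ^^ i) u))" for u by simp
  have "detour (q (n ?z)) = q (n (detour ?z))"
    using detour_q[OF n_in_C[OF z]] detour_n[OF z] by simp
  then show ?case unfolding rot Suc.IH .
qed simp

text \<open>The detour would be the reflection of \<open>C\<close> through an edge of \<open>C\<close>, which fixes that edge.\<close>

lemma detour_neq_reflection:
  assumes x: "x \<in> C" shows "detour x \<noteq> n (((q \<circ> n) ^^ j) x)"
proof
  assume P: "detour x = n (((q \<circ> n) ^^ j) x)"
  have reflect: "((q \<circ> n) ^^ i) (n (((q \<circ> n) ^^ i) z)) = n z" for i z
    by (rule funpow_involutions_reflect) (simp_all add: N.partner_partner Q.partner_partner)
  have "\<exists>i. j = i + i \<or> j = Suc (i + i)" by presburger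
  then obtain i where "j = i + i \<or> j = Suc (i + i)" by blast
  then show False
  proof
    assume "j = i + i"
    let ?y = "((q \<circ> n) ^^ i) x"
    have "((q \<circ> n) ^^ j) x = ((q \<circ> n) ^^ i) ?y" using \<open>j = i + i\<close> by (simp add: funpow_add)
    then have "detour ?y = ((q \<circ> n) ^^ i) (n (((q \<circ> n) ^^ i) ?y))"
      using detour_rotation[OF x, of i] unfolding P by simp
    then have "detour ?y = n ?y" unfolding reflect .
    then show False using detour_facts(5)[OF rotation_in_C[OF x]] by blast
  next
    assume "j = Suc (i + i)"
    let ?w = "((q \<circ> n) ^^ i) x" and ?y = "((q \<circ> n) ^^ Suc i) x"
    have "((q \<circ> n) ^^ j) x = ((q \<circ> n) ^^ Suc i) ?w"
      using \<open>j = Suc (i + i)\<close> by (simp add: funpow_add)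
    then have "detour ?y = ((q \<circ> n) ^^ Suc i) (n (((q \<circ> n) ^^ Suc i) ?w))"
      using detour_rotation[OF x, of "Suc i"] unfolding P by simp
    then have "detour ?y = n ?w" unfolding reflect .
    moreover have "q ?y = n ?w" by (simp add: Q.partner_partner)
    ultimately show False using detour_facts(6)[OF rotation_in_C[OF x, of "Suc i"]] by argo
  qed
qed

lemma impossible: False
proof -
  obtain x0 where x0: "x0 \<in> V" "C = alt_cycle n q x0" by (rule C_eq)
  then have "x0 \<in> C" using F1_cycles.alt_cycle_self by blast
  then have "detour x0 \<in> alt_cycle n q x0" using detour_facts(1) x0 by simp
  then obtain j where "detour x0 = ((q \<circ> n) ^^ j) x0 \<or> detour x0 = n (((q \<circ> n) ^^ j) x0)"
    unfolding alt_cycle_def by blast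
  then show False using detour_neq_rotation[OF x0(1)] detour_neq_reflection[OF \<open>x0 \<in> C\<close>] by blast
qed

end

theorem lemma3:
  fixes V :: "'a set" and E F1 F2 :: "'a set set"
  assumes "simple_graph V E" and "cubic V E" and "bipartite V E"
    and "\<not> (\<exists>S. potential_4_cycle V E S)"
    and "two_factor V E F1"
    and "\<forall>C\<in>components V F1. chordless E F1 C"
    and "locally_optimal V E F1 F2"
  shows "\<forall>C\<in>components V F1. \<exists>D\<in>components V F2. card D \<ge> 10 \<and> card (C \<inter> D) \<ge> 4"
proof (intro ballI, rule ccontr)
  fix C assume C: "C \<in> components V F1"
    and "\<not> (\<exists>D\<in>components V F2. card D \<ge> 10 \<and> card (C \<inter> D) \<ge> 4)"
  then have "\<And>D. D \<in> components V F2 \<Longrightarrow> 4 \<le> card (C \<inter> D) \<Longrightarrow> card D < 10" by force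
  with assms C interpret sparse_component V E F1 F2 C
    by unfold_locales (auto simp: locally_optimal_def)
  show False by (rule impossible)
qed

end
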